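(* Let $M_1,M_2\in\mathcal{G}$ be such that $C_{M_1}$, $C_{M_2}$ and $C_{M_2^{-1}}$ are invertible. Then $$C_{M_1}^{-1}C_{M_1M_2}C_{M_2}^{-1}=\mathbb{1}-Z_{M_1}Z_{M_2^{-1}}.$$
   Context: Bosonic case: $\mathcal{G}=\mathrm{Sp}(2N,\mathbb{R})$, $J$ a complex structure compatible with the standard symplectic form ($J^2=-\mathbb{1}$, $J\Omega J^\intercal=\Omega$, $-J\Omega>0$). Fermionic case: $\mathcal{G}=\mathrm{SO}(2N,\mathbb{R})$, $J$ orthogonal with $J^2=-\mathbb{1}$. For $M\in\mathcal{G}$: $C_M=\frac12(M-JMJ)$, $D_M=\frac12(M+JMJ)$, $Z_M=C_M^{-1}D_M$. *)

theory Defs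
  imports "HOL-Analysis.Analysis"
begin

type_synonym 'n mat2 = "real ^ ('n + 'n) ^ ('n + 'n)"

text \<open>Standard symplectic form on R^(2N), written in block form [[0, 1],[-1, 0]]
  with respect to the splitting R^(2N) = R^N x R^N (index type 'n + 'n).\<close>
definition Omega :: "'n::finite mat2" where
  "Omega = (\<chi> a b. case (a, b) of
      (Inl i, Inr j) \<Rightarrow> (if i = j then 1 else 0)
    | (Inr i, Inl j) \<Rightarrow> (if i = j then -1 else 0)
    | _ \<Rightarrow> 0)"

definition pos_def_mat :: "'n::finite mat2 \<Rightarrow> bool" where
  "pos_def_mat A \<longleftrightarrow> transpose A = A \<and> (\<forall>x. x \<noteq> 0 \<longrightarrow> x \<bullet> (A *v x) > 0)"

definition symplectic_group :: "'n::finite mat2 set" where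
  "symplectic_group = {M. M ** Omega ** transpose M = Omega}"

definition special_orthogonal_group :: "'n::finite mat2 set" where
  "special_orthogonal_group = {M. transpose M ** M = mat 1 \<and> det M = 1}"

definition bosonic_cs :: "'n::finite mat2 \<Rightarrow> bool" where
  "bosonic_cs J \<longleftrightarrow> J ** J = - mat 1 \<and> J ** Omega ** transpose J = Omega
     \<and> pos_def_mat (- (J ** Omega))"

definition fermionic_cs :: "'n::finite mat2 \<Rightarrow> bool" where
  "fermionic_cs J \<longleftrightarrow> transpose J ** J = mat 1 \<and> J ** J = - mat 1"

definition C_of :: "'n::finite mat2 \<Rightarrow> 'n mat2 \<Rightarrow> 'n mat2" where
  "C_of J M = (1/2) *\<^sub>R (M - J ** M ** J)"

definition D_of :: "'n::finite mat2 \<Rightarrow> 'n mat2 \<Rightarrow> 'n mat2" where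
  "D_of J M = (1/2) *\<^sub>R (M + J ** M ** J)"

definition Z_of :: "'n::finite mat2 \<Rightarrow> 'n mat2 \<Rightarrow> 'n mat2" where
  "Z_of J M = matrix_inv (C_of J M) ** D_of J M"

end

theory Submission imports Defs begin

text \<open>For \<open>J\<^sup>2 = -1\<close> every matrix splits as \<open>M = C(M) + D(M)\<close> into a part commuting
  with \<open>J\<close> and a part anticommuting with it, and products obey
  \<open>C(AB) = C(A) C(B) + D(A) D(B)\<close> and \<open>D(AB) = C(A) D(B) + D(A) C(B)\<close>.
  Since \<open>D(1) = 0\<close>, the second rule applied to \<open>M\<^sub>2\<^sup>-\<^sup>1 M\<^sub>2 = 1\<close> gives
  \<open>D(M\<^sub>2) C(M\<^sub>2)\<^sup>-\<^sup>1 = -Z(M\<^sub>2\<^sup>-\<^sup>1)\<close>, and the first rule applied to \<open>M\<^sub>1 M\<^sub>2\<close> then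
  yields the identity. The symplectic or orthogonal structure enters only through the
  invertibility of \<open>M\<^sub>2\<close>.\<close>

lemma matrix_diff_ldistrib: "(A::real^'m^'n) ** (B - C) = A ** B - A ** C"
  by (vector matrix_matrix_mult_def sum_subtractf[symmetric] field_simps)

lemma matrix_diff_rdistrib: "((B::real^'m^'n) - C) ** A = B ** A - C ** A"
  by (vector matrix_matrix_mult_def sum_subtractf[symmetric] field_simps)

lemma matrix_add_rdistrib: "((B::real^'m^'n) + C) ** A = B ** A + C ** A"
  by (vector matrix_matrix_mult_def sum.distrib[symmetric] field_simps)

lemma matrix_neg_left: "(- (A::real^'m^'n)) ** B = - (A ** B)"
  by (vector matrix_matrix_mult_def sum_negf[symmetric] field_simps)

lemma matrix_neg_right: "(A::real^'m^'n) ** (- B) = - (A ** B)"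
  by (vector matrix_matrix_mult_def sum_negf[symmetric] field_simps)

lemmas matrix_ring_simps = matrix_add_ldistrib matrix_add_rdistrib
  matrix_diff_ldistrib matrix_diff_rdistrib matrix_neg_left matrix_neg_right
  matrix_scalar_ac scalar_matrix_assoc[symmetric] matrix_mul_assoc[symmetric]

lemma
  assumes "invertible (A::real^'n^'n)"
  shows matrix_inv_right: "A ** matrix_inv A = mat 1"
    and matrix_inv_left: "matrix_inv A ** A = mat 1"
proof -
  have "\<exists>B. A ** B = mat 1 \<and> B ** A = mat 1"
    using assms by (simp add: invertible_def)
  from someI_ex[OF this] show "A ** matrix_inv A = mat 1" "matrix_inv A ** A = mat 1"
    by (simp_all add: matrix_inv_def)
qed

lemma Omega_mult_Omega: "(Omega::'n::finite mat2) ** Omega = - mat 1"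
proof -
  have "((Omega::'n mat2) ** Omega) $ a $ c = (- mat 1 :: 'n mat2) $ a $ c" for a c
    unfolding matrix_matrix_mult_def Omega_def mat_def
    by (simp add: UNIV_Plus_UNIV[symmetric] sum.Plus del: UNIV_Plus_UNIV)
       (cases a; cases c; auto simp: if_distrib if_distribR cong: if_cong)
  then show ?thesis by (simp add: vec_eq_iff)
qed

lemma symplectic_group_invertible:
  assumes "M \<in> symplectic_group"
  shows "invertible M"
proof -
  have "M ** Omega ** transpose M = Omega"
    using assms by (simp add: symplectic_group_def)
  then have "M ** (- (Omega ** transpose M ** Omega)) = mat 1"
    by (simp add: matrix_neg_right matrix_mul_assoc Omega_mult_Omega)
  then show ?thesis using invertible_right_inverse by blast
qed

lemma special_orthogonal_group_invertible:
  assumes "M \<in> special_orthogonal_group"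
  shows "invertible M"
  using assms invertible_left_inverse by (auto simp: special_orthogonal_group_def)

context
  fixes J :: "'n::finite mat2"
  assumes J_squared: "J ** J = - mat 1"
begin

lemma C_of_mult: "C_of J (A ** B) = C_of J A ** C_of J B + D_of J A ** D_of J B"
  and D_of_mult: "D_of J (A ** B) = C_of J A ** D_of J B + D_of J A ** C_of J B"
proof -
  have J_J: "J ** (J ** X) = - X" for X
    by (simp add: matrix_mul_assoc J_squared matrix_neg_left)
  \<comment> \<open>\<open>algebra_simps\<close> collects \<open>X + X\<close> into the entrywise product \<open>X * 2\<close>\<close>
  have half: "(1/4) *\<^sub>R (X * 2) = (1/2) *\<^sub>R X" for X :: "'n mat2"
    by (simp add: mult_2_right scaleR_add_right flip: scaleR_add_left)
  show "C_of J (A ** B) = C_of J A ** C_of J B + D_of J A ** D_of J B"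
    "D_of J (A ** B) = C_of J A ** D_of J B + D_of J A ** C_of J B"
    unfolding C_of_def D_of_def by (simp_all add: matrix_ring_simps J_J algebra_simps half)
qed

lemma D_of_mat_1: "D_of J (mat 1) = 0"
  unfolding D_of_def using J_squared by simp

lemma D_of_mult_inv_C_of:
  assumes "invertible M" "invertible (C_of J M)" "invertible (C_of J (matrix_inv M))"
  shows "D_of J M ** matrix_inv (C_of J M) = - Z_of J (matrix_inv M)"
proof -
  define C where "C = C_of J M"
  define D where "D = D_of J M"
  define C' where "C' = C_of J (matrix_inv M)"
  define D' where "D' = D_of J (matrix_inv M)"
  have "C' ** D + D' ** C = 0"
    using D_of_mult[of "matrix_inv M" M] D_of_mat_1 matrix_inv_left[OF assms(1)]
    by (simp add: C_def D_def C'_def D'_def)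
  then have "C' ** D = - (D' ** C)"
    by (simp add: eq_neg_iff_add_eq_0)
  have "D ** matrix_inv C = matrix_inv C' ** (C' ** D) ** matrix_inv C"
    using assms(3) by (simp add: matrix_mul_assoc matrix_inv_left C'_def)
  also have "\<dots> = - (matrix_inv C' ** D' ** (C ** matrix_inv C))"
    by (simp add: \<open>C' ** D = - (D' ** C)\<close> matrix_neg_left matrix_neg_right matrix_mul_assoc)
  also have "\<dots> = - Z_of J (matrix_inv M)"
    using assms(2) by (simp add: matrix_inv_right Z_of_def C_def C'_def D'_def)
  finally show ?thesis by (simp add: C_def D_def)
qed

lemma inv_C_of_mult_inv_C_of:
  assumes "invertible M2" "invertible (C_of J M1)" "invertible (C_of J M2)"
    and "invertible (C_of J (matrix_inv M2))"
  shows "matrix_inv (C_of J M1) ** C_of J (M1 ** M2) ** matrix_inv (C_of J M2)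
         = mat 1 - Z_of J M1 ** Z_of J (matrix_inv M2)"
proof -
  have "matrix_inv (C_of J M1) ** C_of J (M1 ** M2) ** matrix_inv (C_of J M2)
      = (matrix_inv (C_of J M1) ** C_of J M1) ** (C_of J M2 ** matrix_inv (C_of J M2))
        + Z_of J M1 ** (D_of J M2 ** matrix_inv (C_of J M2))"
    by (simp add: C_of_mult Z_of_def matrix_add_ldistrib matrix_add_rdistrib matrix_mul_assoc)
  then show ?thesis
    using assms by (simp add: matrix_inv_left matrix_inv_right D_of_mult_inv_C_of matrix_neg_right)
qed

end

theorem proposition1:
  fixes J M1 M2 :: "'n::finite mat2"
  assumes setting:
    "(bosonic_cs J \<and> M1 \<in> symplectic_group \<and> M2 \<in> symplectic_group) \<or>
     (fermionic_cs J \<and> M1 \<in> special_orthogonal_group \<and> M2 \<in> special_orthogonal_group)"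
  assumes "invertible (C_of J M1)" and "invertible (C_of J M2)"
    and "invertible (C_of J (matrix_inv M2))"
  shows "matrix_inv (C_of J M1) ** C_of J (M1 ** M2) ** matrix_inv (C_of J M2)
         = mat 1 - Z_of J M1 ** Z_of J (matrix_inv M2)"
proof -
  have "J ** J = - mat 1" and "invertible M2"
    using setting symplectic_group_invertible special_orthogonal_group_invertible
    by (auto simp: bosonic_cs_def fermionic_cs_def)
  then show ?thesis
    using inv_C_of_mult_inv_C_of assms(2-4) by blast
qed

end
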